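(* Consider a batch contextual bandit with finite context space $\mathcal{S}$, finite action space $\mathcal{A}$, context distribution $d_0$, reward distributions $R(s,a)\in\Delta([0,R_{\max}])$, behavior policy $\pi_b$, $\mu:=d_0\times\pi_b$, and finite class $\mathcal{F}$ of functions $\mathcal{S}\times\mathcal{A}\to[0,R_{\max}]$. Suppose $C<+\infty$ satisfies $\pi_b(a\mid s)\ge1/C$ for all $s,a$, and suppose $f^\star\in\mathcal{F}$ is a valid reward function, i.e. $\mathbb{E}_{(s,a)\sim\nu}[f^\star(s,a)]=\mathbb{E}_{(s,a)\sim\nu,\,r\sim R(s,a)}[r]$ for every admissible $\nu$ and $\mathcal{L}_\mu(f')-\mathcal{L}_\mu(f^\star)=\|f'-f^\star\|_\mu^2$ for every $f'\in\mathcal{F}$. Let $Q^\star(s,a)=\mathbb{E}_{r\sim R(s,a)}[r]$, $\epsilon_{\mathrm{approx}}:=\inf_{f\in\mathcal{F}}\|f-Q^\star\|_\mu^2$, and let $\epsilon\ge0$ satisfy $\epsilon\le\epsilon_{\mathrm{approx}}/2$. Then $$v^\star-2\sqrt{C(\epsilon+\epsilon_{\mathrm{approx}})}\ \le\ v^{\pi_{f^\star}}-2\sqrt{C\epsilon}.$$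
   Context: $\mathcal{L}_\mu(f):=\mathbb{E}_{(s,a)\sim\mu,\,r\sim R(s,a)}[(f(s,a)-r)^2]$; $\|g\|_\nu^2:=\mathbb{E}_{(s,a)\sim\nu}[g(s,a)^2]$; $\pi_f$ is the greedy policy $s\mapsto\arg\max_af(s,a)$ (fixed tie-breaking); admissible distributions are $d_0\times\pi_f$ for $f\in\mathcal{F}$; $v^\pi:=\mathbb{E}_{s\sim d_0,\,r\sim R(s,\pi(s))}[r]$; $v^\star:=\mathbb{E}_{s\sim d_0}[\max_aQ^\star(s,a)]$. *)

theory Defs
  imports "HOL-Probability.Probability"
begin

definition joint :: "'s pmf \<Rightarrow> ('s \<Rightarrow> 'a pmf) \<Rightarrow> ('s \<times> 'a) pmf" where
  "joint d pol = bind_pmf d (\<lambda>s. map_pmf (\<lambda>a. (s, a)) (pol s))"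

definition det_policy :: "('s \<Rightarrow> 'a) \<Rightarrow> 's \<Rightarrow> 'a pmf" where
  "det_policy pol s = return_pmf (pol s)"

definition greedy :: "('s \<Rightarrow> 'a \<Rightarrow> real) \<Rightarrow> 's \<Rightarrow> 'a" where
  "greedy f s = (SOME a. \<forall>b. f s b \<le> f s a)"

definition mean_reward :: "('s \<Rightarrow> 'a \<Rightarrow> real measure) \<Rightarrow> 's \<Rightarrow> 'a \<Rightarrow> real" where
  "mean_reward R s a = (\<integral>r. r \<partial>(R s a))"

definition sq_loss :: "('s \<times> 'a) pmf \<Rightarrow> ('s \<Rightarrow> 'a \<Rightarrow> real measure) \<Rightarrow> ('s \<Rightarrow> 'a \<Rightarrow> real) \<Rightarrow> real" where
  "sq_loss mu R f = measure_pmf.expectation mu (\<lambda>(s, a). \<integral>r. (f s a - r)^2 \<partial>(R s a))"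

definition sq_norm :: "('s \<times> 'a) pmf \<Rightarrow> ('s \<Rightarrow> 'a \<Rightarrow> real) \<Rightarrow> real" where
  "sq_norm nu g = measure_pmf.expectation nu (\<lambda>(s, a). (g s a)^2)"

definition admissible :: "'s pmf \<Rightarrow> ('s \<Rightarrow> 'a \<Rightarrow> real) set \<Rightarrow> ('s \<times> 'a) pmf \<Rightarrow> bool" where
  "admissible d0 F nu \<longleftrightarrow> (\<exists>f\<in>F. nu = joint d0 (det_policy (greedy f)))"

definition policy_value :: "'s pmf \<Rightarrow> ('s \<Rightarrow> 'a \<Rightarrow> real measure) \<Rightarrow> ('s \<Rightarrow> 'a) \<Rightarrow> real" where
  "policy_value d0 R pol = measure_pmf.expectation d0 (\<lambda>s. \<integral>r. r \<partial>(R s (pol s)))"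

definition opt_value :: "'s pmf \<Rightarrow> ('s \<Rightarrow> 'a::finite \<Rightarrow> real measure) \<Rightarrow> real" where
  "opt_value d0 R = measure_pmf.expectation d0 (\<lambda>s. Max (range (mean_reward R s)))"

end

theory Submission
  imports Defs
begin

text \<open>
  Up to a constant (the mean reward variance), the squared loss of f is \<open>\<parallel>f - Q*\<parallel>\<^sup>2\<close> under mu,
  so f*, a loss minimiser over F, attains eps_approx. Validity of f* on the distribution
  \<open>d0 \<times> \<pi>\<^sub>f\<^sub>*\<close> of its own greedy policy gives
  \<open>v(\<pi>\<^sub>f\<^sub>*) = E\<^sub>d\<^sub>0 f*(s, \<pi>\<^sub>f\<^sub>*(s)) \<ge> E\<^sub>d\<^sub>0 f*(s, \<pi>*(s))\<close>, where \<open>\<pi>*\<close> is greedy for Q*, so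
  \<open>v* - v(\<pi>\<^sub>f\<^sub>*)\<close> is at most the mean of \<open>Q* - f*\<close> under \<open>d0 \<times> \<pi>*\<close>. By Cauchy-Schwarz and the
  density bound \<open>d0 \<times> \<pi>* \<le> C \<cdot> mu\<close> this is at most \<open>sqrt (C \<cdot> eps_approx)\<close>, and the claim reduces
  to \<open>sqrt x + 2 sqrt y \<le> 2 sqrt (x + y)\<close> for \<open>0 \<le> y \<le> x / 2\<close>.
\<close>

lemma joint_det_policy: "joint d (det_policy p) = map_pmf (\<lambda>s. (s, p s)) d"
  by (simp add: joint_def det_policy_def map_pmf_def bind_return_pmf)

lemma pmf_joint: "pmf (joint d pol) (s, a) = pmf d s * pmf (pol s) a"
proof -
  have "pmf (joint d pol) (s, a) = measure_pmf.expectation d (\<lambda>s'. pmf (map_pmf (Pair s') (pol s')) (s, a))"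
    by (simp add: joint_def pmf_bind)
  also have "\<dots> = measure_pmf.expectation d (\<lambda>s'. if s' = s then pmf (pol s) a else 0)"
    by (intro Bochner_Integration.integral_cong refl)
       (auto simp: pmf_map_inj' inj_on_def pmf_eq_0_set_pmf)
  also have "\<dots> = pmf d s * pmf (pol s) a"
    by (simp add: integral_measure_pmf_real[where A="{s}"] split: if_splits)
  finally show ?thesis .
qed

lemma expectation_le_if_pmf_le:
  fixes p q :: "'x::finite pmf" and h :: "'x \<Rightarrow> real"
  assumes "\<And>x. pmf p x \<le> C * pmf q x" and "\<And>x. 0 \<le> h x"
  shows "measure_pmf.expectation p h \<le> C * measure_pmf.expectation q h"
proof -
  have "measure_pmf.expectation p h = (\<Sum>x\<in>UNIV. h x * pmf p x)"
    by (simp add: integral_measure_pmf_real[of UNIV])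
  also have "\<dots> \<le> (\<Sum>x\<in>UNIV. h x * (C * pmf q x))"
    using assms by (intro sum_mono mult_left_mono) auto
  also have "\<dots> = C * measure_pmf.expectation q h"
    by (simp add: integral_measure_pmf_real[of UNIV] sum_distrib_left mult_ac)
  finally show ?thesis .
qed

lemma pmf_joint_det_policy_le:
  assumes "C > 0" and "\<And>s a. pmf (pol s) a \<ge> 1 / C"
  shows "pmf (joint d (det_policy p)) x \<le> C * pmf (joint d pol) x"
proof -
  obtain s a where x: "x = (s, a)" by fastforce
  have "1 \<le> C * pmf (pol s) a"
    using assms by (simp add: field_simps)
  then have "pmf (det_policy p s) a \<le> C * pmf (pol s) a"
    by (simp add: det_policy_def indicator_def)
  then show ?thesis
    unfolding x pmf_joint by (metis mult_left_mono mult.left_commute pmf_nonneg)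
qed

lemma (in prob_space) expectation_le_sqrt_second_moment:
  fixes X :: "'a \<Rightarrow> real"
  assumes "integrable M X" and "integrable M (\<lambda>x. (X x)\<^sup>2)"
  shows "expectation X \<le> sqrt (expectation (\<lambda>x. (X x)\<^sup>2))"
proof -
  have "(expectation X)\<^sup>2 \<le> expectation (\<lambda>x. (X x)\<^sup>2)"
    using variance_positive[of X] variance_eq[OF assms] by simp
  then show ?thesis
    using real_sqrt_le_mono by fastforce
qed

lemma (in prob_space) expectation_square_diff_const:
  fixes X :: "'a \<Rightarrow> real"
  assumes "integrable M X" and "integrable M (\<lambda>x. (X x)\<^sup>2)"
  shows "expectation (\<lambda>x. (c - X x)\<^sup>2) = (c - expectation X)\<^sup>2 + variance X"
  using assms by (simp add: variance_eq power2_diff prob_space power2_eq_square algebra_simps)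

lemma integrable_bounded_real:
  fixes M :: "real measure"
  assumes "finite_measure M" and "sets M = sets borel" and "AE r in M. \<bar>r\<bar> \<le> B"
  shows "integrable M (\<lambda>r. r)" and "integrable M (\<lambda>r. r\<^sup>2)"
proof -
  interpret finite_measure M by fact
  have borel: "g \<in> borel_measurable M" if "g \<in> borel_measurable borel" for g :: "real \<Rightarrow> real"
    using that unfolding measurable_cong_sets[OF assms(2) refl] .
  show "integrable M (\<lambda>r. r)"
    using assms(3) by (intro integrable_const_bound[where B=B] borel) auto
  have "\<bar>r\<^sup>2\<bar> \<le> B\<^sup>2" if "\<bar>r\<bar> \<le> B" for r :: real
    using power_mono[OF that abs_ge_zero, of 2] by simp
  then have "AE r in M. \<bar>r\<^sup>2\<bar> \<le> B\<^sup>2"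
    using assms(3) by (auto elim: eventually_mono)
  then show "integrable M (\<lambda>r. r\<^sup>2)"
    by (intro integrable_const_bound[where B="B\<^sup>2"] borel) auto
qed

lemma sq_loss_eq_sq_norm_add_variance:
  fixes mu :: "('s::finite \<times> 'a::finite) pmf" and R :: "'s \<Rightarrow> 'a \<Rightarrow> real measure"
  assumes "\<And>s a. prob_space (R s a)"
    and "\<And>s a. integrable (R s a) (\<lambda>r. r)" and "\<And>s a. integrable (R s a) (\<lambda>r. r\<^sup>2)"
  shows "sq_loss mu R f = sq_norm mu (\<lambda>s a. f s a - mean_reward R s a)
    + measure_pmf.expectation mu (\<lambda>(s, a). \<integral>r. (r - mean_reward R s a)\<^sup>2 \<partial>R s a)"
    (is "_ = _ + measure_pmf.expectation mu (\<lambda>(s, a). ?V s a)")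
proof -
  have "(\<integral>r. (f s a - r)\<^sup>2 \<partial>R s a) = (f s a - mean_reward R s a)\<^sup>2 + ?V s a" for s a
    using prob_space.expectation_square_diff_const[OF assms(1-3)] by (simp add: mean_reward_def)
  then have "sq_loss mu R f = measure_pmf.expectation mu
      (\<lambda>x. (\<lambda>(s, a). (f s a - mean_reward R s a)\<^sup>2) x + (\<lambda>(s, a). ?V s a) x)"
    unfolding sq_loss_def by (intro Bochner_Integration.integral_cong) (auto split: prod.splits)
  also have "\<dots> = sq_norm mu (\<lambda>s a. f s a - mean_reward R s a) + measure_pmf.expectation mu (\<lambda>(s, a). ?V s a)"
    unfolding sq_norm_def
    by (rule Bochner_Integration.integral_add) (simp_all add: integrable_measure_pmf_finite)
  finally show ?thesis .
qed

lemma greedy_ge: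
  fixes f :: "'s \<Rightarrow> 'a::finite \<Rightarrow> real"
  shows "f s b \<le> f s (greedy f s)"
proof -
  have "Max (range (f s)) \<in> range (f s)"
    by (intro Max_in) auto
  then have "\<exists>a. \<forall>b. f s b \<le> f s a"
    by (metis Max_ge finite finite_imageI rangeE rangeI)
  then show ?thesis
    unfolding greedy_def by (rule someI2_ex) blast
qed

lemma greedy_eq_Max:
  fixes f :: "'s \<Rightarrow> 'a::finite \<Rightarrow> real"
  shows "f s (greedy f s) = Max (range (f s))"
  using greedy_ge by (intro antisym Max_ge Max.boundedI) auto

lemma INF_sq_norm_eq_of_loss_minimizer:
  fixes mu :: "('s::finite \<times> 'a::finite) pmf" and R :: "'s \<Rightarrow> 'a \<Rightarrow> real measure"
    and fstar :: "'s \<Rightarrow> 'a \<Rightarrow> real"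
  assumes "\<And>s a. prob_space (R s a)"
    and "\<And>s a. integrable (R s a) (\<lambda>r. r)" and "\<And>s a. integrable (R s a) (\<lambda>r. r\<^sup>2)"
    and "fstar \<in> F" and "\<And>f. f \<in> F \<Longrightarrow> sq_loss mu R fstar \<le> sq_loss mu R f"
  shows "(INF f\<in>F. sq_norm mu (\<lambda>s a. f s a - mean_reward R s a))
    = sq_norm mu (\<lambda>s a. fstar s a - mean_reward R s a)"
proof (rule cInf_eq_minimum)
  fix x
  assume "x \<in> (\<lambda>f. sq_norm mu (\<lambda>s a. f s a - mean_reward R s a)) ` F"
  then obtain f where "f \<in> F" and x: "x = sq_norm mu (\<lambda>s a. f s a - mean_reward R s a)"
    by blast
  then show "sq_norm mu (\<lambda>s a. fstar s a - mean_reward R s a) \<le> x"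
    using assms(5) sq_loss_eq_sq_norm_add_variance[OF assms(1-3), where mu=mu] by fastforce
qed (use assms(4) in blast)

lemma sq_norm_nonneg: "0 \<le> sq_norm nu g"
  unfolding sq_norm_def by (intro Bochner_Integration.integral_nonneg) (auto split: prod.splits)

lemma opt_value_minus_greedy_value_le:
  fixes d0 :: "'s::finite pmf" and R :: "'s \<Rightarrow> 'a::finite \<Rightarrow> real measure"
    and pol :: "'s \<Rightarrow> 'a pmf" and f :: "'s \<Rightarrow> 'a \<Rightarrow> real"
  assumes valid: "measure_pmf.expectation (joint d0 (det_policy (greedy f))) (\<lambda>(s, a). f s a)
      = measure_pmf.expectation (joint d0 (det_policy (greedy f))) (\<lambda>(s, a). \<integral>r. r \<partial>R s a)"
    and "C > 0" and "\<And>s a. pmf (pol s) a \<ge> 1 / C"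
  shows "opt_value d0 R - policy_value d0 R (greedy f)
    \<le> sqrt (C * sq_norm (joint d0 pol) (\<lambda>s a. f s a - mean_reward R s a))"
proof -
  define Q where "Q = mean_reward R"
  define nu where "nu = joint d0 (det_policy (greedy Q))"
  have "measure_pmf.expectation nu (\<lambda>(s, a). f s a) \<le> measure_pmf.expectation d0 (\<lambda>s. f s (greedy f s))"
    unfolding nu_def joint_det_policy
    by (auto intro!: integral_mono simp: integrable_measure_pmf_finite greedy_ge)
  also have "\<dots> = policy_value d0 R (greedy f)"
    using valid by (simp add: policy_value_def joint_det_policy)
  finally have "opt_value d0 R - policy_value d0 R (greedy f)
      \<le> measure_pmf.expectation nu (\<lambda>(s, a). Q s a) - measure_pmf.expectation nu (\<lambda>(s, a). f s a)"
    by (simp add: opt_value_def nu_def joint_det_policy greedy_eq_Max Q_def)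
  also have "\<dots> = measure_pmf.expectation nu (\<lambda>(s, a). Q s a - f s a)"
    by (subst Bochner_Integration.integral_diff[symmetric])
       (auto simp: integrable_measure_pmf_finite intro!: Bochner_Integration.integral_cong split: prod.splits)
  also have "\<dots> \<le> sqrt (measure_pmf.expectation nu (\<lambda>x. ((\<lambda>(s, a). Q s a - f s a) x)\<^sup>2))"
    by (rule measure_pmf.expectation_le_sqrt_second_moment) (simp_all add: integrable_measure_pmf_finite)
  also have "\<dots> = sqrt (sq_norm nu (\<lambda>s a. f s a - Q s a))"
    unfolding sq_norm_def
    by (auto intro!: arg_cong[where f=sqrt] Bochner_Integration.integral_cong
        simp: power2_commute split: prod.splits)
  also have "\<dots> \<le> sqrt (C * sq_norm (joint d0 pol) (\<lambda>s a. f s a - Q s a))"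
    unfolding sq_norm_def nu_def
    by (intro real_sqrt_le_mono expectation_le_if_pmf_le pmf_joint_det_policy_le) (use assms in auto)
  finally show ?thesis
    unfolding Q_def .
qed

lemma sqrt_add_two_sqrt_le:
  fixes x y :: real
  assumes "0 \<le> y" and "y \<le> x / 2"
  shows "sqrt x + 2 * sqrt y \<le> 2 * sqrt (x + y)"
proof -
  have x: "0 \<le> x"
    using assms by simp
  have "16 * (x * y) \<le> 9 * x\<^sup>2"
    using mult_left_mono[OF assms(2) x] by (simp add: power2_eq_square) (use zero_le_square[of x] in linarith)
  then have "(4 * sqrt (x * y))\<^sup>2 \<le> (3 * x)\<^sup>2"
    using x assms(1) by (simp add: power_mult_distrib)
  then have "4 * sqrt (x * y) \<le> 3 * x"
    by (rule power2_le_imp_le) (simp add: x)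
  then have "(sqrt x + 2 * sqrt y)\<^sup>2 \<le> (2 * sqrt (x + y))\<^sup>2"
    using x assms(1) by (simp add: power2_sum power_mult_distrib real_sqrt_mult)
  then show ?thesis
    by (rule power2_le_imp_le) (simp add: x assms(1))
qed

theorem proposition1:
  fixes d0 :: "'s::finite pmf"
    and R :: "'s \<Rightarrow> 'a::finite \<Rightarrow> real measure"
    and Rmax :: real
    and pib :: "'s \<Rightarrow> 'a pmf"
    and F :: "('s \<Rightarrow> 'a \<Rightarrow> real) set"
    and C :: real
    and fstar :: "'s \<Rightarrow> 'a \<Rightarrow> real"
    and eps :: real
  assumes R_prob: "\<And>s a. prob_space (R s a)"
    and R_borel: "\<And>s a. sets (R s a) = sets borel"
    and R_range: "\<And>s a. AE r in R s a. r \<in> {0..Rmax}"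
    and F_fin: "finite F"
    and F_range: "\<And>f s a. f \<in> F \<Longrightarrow> f s a \<in> {0..Rmax}"
    and C_pos: "C > 0"
    and cover: "\<And>s a. pmf (pib s) a \<ge> 1 / C"
    and fstar_in: "fstar \<in> F"
    and fstar_valid1: "\<And>nu. admissible d0 F nu \<Longrightarrow>
          measure_pmf.expectation nu (\<lambda>(s, a). fstar s a)
          = measure_pmf.expectation nu (\<lambda>(s, a). \<integral>r. r \<partial>(R s a))"
    and fstar_valid2: "\<And>f'. f' \<in> F \<Longrightarrow>
          sq_loss (joint d0 pib) R f' - sq_loss (joint d0 pib) R fstar
          = sq_norm (joint d0 pib) (\<lambda>s a. f' s a - fstar s a)"
    and eps_nonneg: "eps \<ge> 0"
    and eps_le: "eps \<le> (INF f\<in>F. sq_norm (joint d0 pib) (\<lambda>s a. f s a - mean_reward R s a)) / 2"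
  shows "opt_value d0 R
           - 2 * sqrt (C * (eps + (INF f\<in>F. sq_norm (joint d0 pib) (\<lambda>s a. f s a - mean_reward R s a))))
         \<le> policy_value d0 R (greedy fstar) - 2 * sqrt (C * eps)"
proof -
  let ?mu = "joint d0 pib"
  let ?N = "sq_norm ?mu (\<lambda>s a. fstar s a - mean_reward R s a)"
  have R_bounded: "AE r in R s a. \<bar>r\<bar> \<le> Rmax" for s a
    using R_range[of s a] by eventually_elim auto
  have R_finite: "finite_measure (R s a)" for s a
    using R_prob[of s a] by (simp add: prob_space_def)
  note R_integrable = integrable_bounded_real[OF R_finite R_borel R_bounded]
  have "sq_loss ?mu R fstar \<le> sq_loss ?mu R f" if "f \<in> F" for f
    using fstar_valid2[OF that] sq_norm_nonneg[of ?mu "\<lambda>s a. f s a - fstar s a"] by linarith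
  then have approx: "(INF f\<in>F. sq_norm ?mu (\<lambda>s a. f s a - mean_reward R s a)) = ?N"
    by (rule INF_sq_norm_eq_of_loss_minimizer[OF R_prob R_integrable fstar_in])
  have gap: "opt_value d0 R - policy_value d0 R (greedy fstar) \<le> sqrt (C * ?N)"
    using fstar_in
    by (intro opt_value_minus_greedy_value_le fstar_valid1 C_pos cover) (auto simp: admissible_def)
  have "C * eps \<le> C * ?N / 2"
    using eps_le approx C_pos by simp
  then have "sqrt (C * ?N) + 2 * sqrt (C * eps) \<le> 2 * sqrt (C * (eps + ?N))"
    using sqrt_add_two_sqrt_le[of "C * eps" "C * ?N"] eps_nonneg C_pos by (simp add: algebra_simps)
  with gap show ?thesis
    unfolding approx by linarith
qed

end
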